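(* Let $(E,\|\cdot\|_E)$, $(F,\|\cdot\|_F)$ be normed vector spaces, $\Omega\subseteq E$, $f:\Omega\to F$, and $\mathfrak{X}\subseteq\Omega$. Assume $f$ is $\beta$-Lipschitz on $\mathfrak{X}$, i.e. $\|f(x)-f(y)\|_F\le\beta\|x-y\|_E$ for all $x,y\in\mathfrak{X}$. Then for any $\eta>0$ and $\varepsilon>0$, $$\mathcal{N}(S^+_\eta[f(\mathfrak{X})],\|\cdot\|_F,\varepsilon)\le\mathcal{N}\Big(\mathfrak{X},\|\cdot\|_E,\frac{\eta}{16\beta}\varepsilon\Big)^2.$$
   Context: For a subset $\mathfrak{Y}$ of a normed space, $\mathcal{N}(\mathfrak{Y},\|\cdot\|,\varepsilon)$ is the minimal number of closed balls of radius $\varepsilon$ with centers in $\mathfrak{Y}$ needed to cover $\mathfrak{Y}$. The set of long chords is $S^+_\eta[f(\mathfrak{X})]=\{(f(x)-f(y))/\|f(x)-f(y)\|_F:\ x,y\in\mathfrak{X},\ \|f(x)-f(y)\|_F>\eta\}$. *)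

theory Defs
  imports "HOL-Analysis.Analysis" "HOL-Library.Extended_Nat"
begin

text \<open>Covering number: minimal number of closed balls of radius e with centers in Y
  needed to cover Y; infinity if no finite such cover exists.\<close>
definition covering_number :: "'a::metric_space set \<Rightarrow> real \<Rightarrow> enat" where
  "covering_number Y e =
     Inf {enat (card C) | C. finite C \<and> C \<subseteq> Y \<and> Y \<subseteq> (\<Union>c\<in>C. cball c e)}"

definition long_chords :: "real \<Rightarrow> ('a \<Rightarrow> 'b::real_normed_vector) \<Rightarrow> 'a set \<Rightarrow> 'b set" where
  "long_chords \<eta> f X =
     {(f x - f y) /\<^sub>R norm (f x - f y) | x y. x \<in> X \<and> y \<in> X \<and> norm (f x - f y) > \<eta>}"

end

theory Submission
  imports Defs
begin

text \<open>Cover \<open>X\<close> by \<open>N\<close> balls of radius \<open>\<delta>\<close> with centres in \<open>X\<close>. A long chord from \<open>x\<close> to \<open>y\<close>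
  is classified by the pair of centres near \<open>x\<close> and \<open>y\<close>, giving \<open>N\<^sup>2\<close> classes. Two chords
  in one class have endpoints \<open>2\<delta>\<close>-close, so by the Lipschitz bound the chord vectors differ
  by at most \<open>4\<beta>\<delta>\<close>; as both have norm \<open>> \<eta>\<close>, their normalisations differ by at most
  \<open>8\<beta>\<delta>/\<eta>\<close>. So every normalised chord of a class is the centre of a ball of that radius
  covering the whole class, and these centres lie in the set being covered.\<close>

lemma covering_number_le_card:
  fixes Y :: "'a::metric_space set"
  assumes "finite C" "C \<subseteq> Y" "Y \<subseteq> (\<Union>c\<in>C. cball c e)"
  shows "covering_number Y e \<le> enat (card C)"
  unfolding covering_number_def using assms by (intro Inf_lower) auto

lemma covering_numberE:
  fixes Y :: "'a::metric_space set"
  assumes "covering_number Y e \<noteq> \<infinity>"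
  obtains C where "finite C" "C \<subseteq> Y" "Y \<subseteq> (\<Union>c\<in>C. cball c e)"
    "covering_number Y e = enat (card C)"
proof -
  let ?sizes = "{enat (card C) | C. finite C \<and> C \<subseteq> Y \<and> Y \<subseteq> (\<Union>c\<in>C. cball c e)}"
  have "?sizes \<noteq> {}"
    using assms unfolding covering_number_def by (intro notI) (simp only: Inf_empty top_enat_def)
  then obtain k where "k \<in> ?sizes"
    by (meson equals0I)
  then have "Inf ?sizes \<in> ?sizes"
    by (rule wellorder_InfI)
  then obtain C where "Inf ?sizes = enat (card C)" "finite C" "C \<subseteq> Y"
    "Y \<subseteq> (\<Union>c\<in>C. cball c e)"
    by (smt (verit) mem_Collect_eq)
  then show thesis
    by (intro that) (simp_all add: covering_number_def)
qed

lemma covering_number_le_card_of_small_pieces: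
  fixes T :: "'a::metric_space set"
  assumes "finite I" "T \<subseteq> (\<Union>i\<in>I. A i)" "\<And>i. i \<in> I \<Longrightarrow> A i \<subseteq> T"
    and small: "\<And>i s t. i \<in> I \<Longrightarrow> s \<in> A i \<Longrightarrow> t \<in> A i \<Longrightarrow> dist s t \<le> r"
  shows "covering_number T r \<le> enat (card I)"
proof -
  define J where "J = {i \<in> I. A i \<noteq> {}}"
  define rep where "rep i = (SOME s. s \<in> A i)" for i
  have rep: "rep i \<in> A i" if "i \<in> J" for i
    using that unfolding J_def rep_def by (simp add: some_in_eq)
  have "covering_number T r \<le> enat (card (rep ` J))"
  proof (rule covering_number_le_card)
    show "finite (rep ` J)"
      using assms(1) by (simp add: J_def)
    show "rep ` J \<subseteq> T"
      using rep assms(3) by (auto simp: J_def)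
    show "T \<subseteq> (\<Union>c\<in>rep ` J. cball c r)"
    proof
      fix t assume "t \<in> T"
      then obtain i where "i \<in> I" "t \<in> A i"
        using assms(2) by auto
      then have "i \<in> J"
        unfolding J_def by auto
      with \<open>i \<in> I\<close> \<open>t \<in> A i\<close> have "dist (rep i) t \<le> r"
        using small rep by blast
      with \<open>i \<in> J\<close> show "t \<in> (\<Union>c\<in>rep ` J. cball c r)"
        by auto
    qed
  qed
  also have "card (rep ` J) \<le> card J"
    using assms(1) by (intro card_image_le) (simp add: J_def)
  also have "card J \<le> card I"
    using assms(1) by (intro card_mono) (auto simp: J_def)
  finally show ?thesis
    by simp
qed

lemma norm_sgn_diff_le:
  fixes u v :: "'a::real_normed_vector"
  assumes "u \<noteq> 0"
  shows "norm (sgn u - sgn v) \<le> 2 * norm (u - v) / norm u"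
proof -
  let ?w = "(inverse (norm u) - inverse (norm v)) *\<^sub>R v"
  have "sgn u - sgn v = (u - v) /\<^sub>R norm u + ?w"
    by (simp add: sgn_div_norm scaleR_diff_left scaleR_diff_right)
  then have "norm (sgn u - sgn v) \<le> norm (u - v) / norm u + norm ?w"
    by (metis norm_triangle_ineq norm_scaleR abs_inverse abs_norm_cancel divide_inverse_commute)
  moreover have "norm ?w \<le> norm (u - v) / norm u"
  proof (cases "v = 0")
    case False
    with assms have "norm ?w = \<bar>norm v - norm u\<bar> / norm u"
      by (simp add: field_simps)
    also have "\<dots> \<le> norm (u - v) / norm u"
      by (intro divide_right_mono) (metis norm_minus_commute norm_triangle_ineq3, simp)
    finally show ?thesis .
  qed simp
  ultimately show ?thesis
    by simp
qed

lemma dist_sgn_chords_le: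
  fixes f :: "'a::metric_space \<Rightarrow> 'b::real_normed_vector"
  assumes "\<beta>-lipschitz_on X f" and "\<eta> > 0"
    and "x \<in> X" "y \<in> X" "x' \<in> X" "y' \<in> X"
    and "dist x x' \<le> \<delta>" "dist y y' \<le> \<delta>"
    and "norm (f x - f y) > \<eta>"
  shows "dist (sgn (f x - f y)) (sgn (f x' - f y')) \<le> 4 * \<beta> * \<delta> / \<eta>"
proof -
  have "\<beta> \<ge> 0" using assms(1) by (rule lipschitz_on_nonneg)
  have "\<delta> \<ge> 0" using assms(7) zero_le_dist order_trans by blast
  have "(f x - f y) - (f x' - f y') = (f x - f x') - (f y - f y')"
    by (simp add: algebra_simps)
  then have "norm ((f x - f y) - (f x' - f y')) \<le> dist (f x) (f x') + dist (f y) (f y')"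
    by (metis dist_norm norm_triangle_ineq4)
  also have "\<dots> \<le> \<beta> * dist x x' + \<beta> * dist y y'"
    using assms by (intro add_mono lipschitz_onD) auto
  also have "\<dots> \<le> \<beta> * \<delta> + \<beta> * \<delta>"
    using assms \<open>\<beta> \<ge> 0\<close> by (intro add_mono mult_left_mono) auto
  finally have close: "norm ((f x - f y) - (f x' - f y')) \<le> 2 * \<beta> * \<delta>" by simp
  have "f x - f y \<noteq> 0" using assms by auto
  then have "dist (sgn (f x - f y)) (sgn (f x' - f y'))
      \<le> 2 * norm ((f x - f y) - (f x' - f y')) / norm (f x - f y)"
    unfolding dist_norm by (rule norm_sgn_diff_le)
  also have "\<dots> \<le> 2 * (2 * \<beta> * \<delta>) / \<eta>"
    using assms close \<open>\<beta> \<ge> 0\<close> \<open>\<delta> \<ge> 0\<close> by (intro frac_le) auto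
  finally show ?thesis by simp
qed

lemma covering_number_long_chords_le:
  fixes f :: "'a::metric_space \<Rightarrow> 'b::real_normed_vector"
  assumes lip: "\<beta>-lipschitz_on X f" and "\<eta> > 0" and "8 * \<beta> * \<delta> \<le> \<eta> * r"
  shows "covering_number (long_chords \<eta> f X) r \<le> covering_number X \<delta> ^ 2"
proof (cases "covering_number X \<delta> = \<infinity>")
  case True
  then show ?thesis
    by (simp add: numeral_2_eq_2)
next
  case False
  then obtain C where C: "finite C" "C \<subseteq> X" "X \<subseteq> (\<Union>c\<in>C. cball c \<delta>)"
    and card_C: "covering_number X \<delta> = enat (card C)"
    by (rule covering_numberE)
  define chords_near where "chords_near p = {sgn (f x - f y) | x y. x \<in> X \<and> y \<in> X
      \<and> dist (fst p) x \<le> \<delta> \<and> dist (snd p) y \<le> \<delta> \<and> norm (f x - f y) > \<eta>}" for p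
  have "covering_number (long_chords \<eta> f X) r \<le> enat (card (C \<times> C))"
  proof (rule covering_number_le_card_of_small_pieces[where A = chords_near])
    show "finite (C \<times> C)"
      using C by simp
    show "long_chords \<eta> f X \<subseteq> (\<Union>p\<in>C \<times> C. chords_near p)"
    proof
      fix s assume "s \<in> long_chords \<eta> f X"
      then obtain x y where xy: "x \<in> X" "y \<in> X" "norm (f x - f y) > \<eta>" "s = sgn (f x - f y)"
        unfolding long_chords_def by (auto simp: sgn_div_norm)
      moreover obtain c where "c \<in> C" "dist c x \<le> \<delta>"
        using C(3) \<open>x \<in> X\<close> by (meson UN_E mem_cball subsetD)
      moreover obtain d where "d \<in> C" "dist d y \<le> \<delta>"
        using C(3) \<open>y \<in> X\<close> by (meson UN_E mem_cball subsetD)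
      ultimately show "s \<in> (\<Union>p\<in>C \<times> C. chords_near p)"
        unfolding chords_near_def by force
    qed
    show "chords_near p \<subseteq> long_chords \<eta> f X" for p
      unfolding chords_near_def long_chords_def by (auto simp: sgn_div_norm)
    show "dist s t \<le> r" if "s \<in> chords_near p" "t \<in> chords_near p" for p s t
    proof -
      obtain x y where x: "x \<in> X" "dist (fst p) x \<le> \<delta>" and y: "y \<in> X" "dist (snd p) y \<le> \<delta>"
        and long: "norm (f x - f y) > \<eta>" and s: "s = sgn (f x - f y)"
        using \<open>s \<in> chords_near p\<close> unfolding chords_near_def by blast
      obtain x' y' where x': "x' \<in> X" "dist (fst p) x' \<le> \<delta>" and y': "y' \<in> X" "dist (snd p) y' \<le> \<delta>"
        and t: "t = sgn (f x' - f y')"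
        using \<open>t \<in> chords_near p\<close> unfolding chords_near_def by blast
      have close: "dist x x' \<le> 2 * \<delta>" "dist y y' \<le> 2 * \<delta>"
        using x x' y y' dist_triangle3[of x x' "fst p"] dist_triangle3[of y y' "snd p"] by auto
      have "dist s t \<le> 4 * \<beta> * (2 * \<delta>) / \<eta>"
        unfolding s t by (rule dist_sgn_chords_le[OF lip \<open>\<eta> > 0\<close> x(1) y(1) x'(1) y'(1) close long])
      also have "\<dots> \<le> r"
        using assms by (simp add: pos_divide_le_eq mult_ac)
      finally show ?thesis .
    qed
  qed
  then show ?thesis
    using card_C by (simp add: card_cartesian_product power2_eq_square)
qed

theorem proposition1:
  fixes \<Omega> X :: "'a::real_normed_vector set"
    and f :: "'a \<Rightarrow> 'b::real_normed_vector"
    and \<beta> \<eta> \<epsilon> :: real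
  assumes "X \<subseteq> \<Omega>"
    and "\<beta> > 0"
    and "\<forall>x\<in>X. \<forall>y\<in>X. norm (f x - f y) \<le> \<beta> * norm (x - y)"
    and "\<eta> > 0" and "\<epsilon> > 0"
  shows "covering_number (long_chords \<eta> f X) \<epsilon>
           \<le> (covering_number X (\<eta> / (16 * \<beta>) * \<epsilon>)) ^ 2"
proof (rule covering_number_long_chords_le)
  show "\<beta>-lipschitz_on X f"
    using assms(2,3) by (auto simp: lipschitz_on_def dist_norm)
  show "8 * \<beta> * (\<eta> / (16 * \<beta>) * \<epsilon>) \<le> \<eta> * \<epsilon>"
    using assms(2,4,5) by (simp add: field_simps)
qed (fact \<open>\<eta> > 0\<close>)

end
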